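(* For every $k\ge0$, $$t_k=\sum_{n\ge0}\frac{(-1)^n}{n!}I_0^nI_{n+k},$$ $$s_k=\sum_{n\ge0}\sum_{i=0}^n\frac{(-1)^{n+1}I_0^iJ_0^{2n-2i+1}}{2^{n-i}\,i!\,(n-i)!\,(2n-2i+1)}I_{n+k+1}+\sum_{n\ge0}\frac{(-1)^n}{n!}\Big(I_0+\tfrac12J_0^2\Big)^nJ_{n+k}.$$ In particular the change of variables $(\mathbf t,\mathbf s)\mapsto(I_k,J_k)_{k\ge0}$ is invertible.
   Context: Let $\mathbf t=(t_0,t_1,\dots)$, $\mathbf s=(s_0,s_1,\dots)$ be formal variables and $\tilde t_n=t_n-\delta_{n,1}$. Let $v=v(\mathbf t)$ and $r=r(\mathbf t,\mathbf s)$ be the unique formal power series with $v(0)=0$, $r(0)=0$ solving the genus-zero Euler–Lagrange equations $\sum_{n\ge0}\tilde t_n\frac{v^n}{n!}=0$ and $\sum_{n\ge0}\tilde t_{n+1}\sum_{i=0}^n\frac{v^ir^{2n-2i+1}}{i!(2n-2i+1)!!}+\sum_{n\ge0}\frac{s_n}{n!}\big(v+\frac{r^2}2\big)^n=0$ (these are $v_{\rm top}=\partial_{t_0}^2\mathcal F^c_0$ and $r_{\rm top}=\partial_{t_0}\mathcal F^o_0$). Define the Itzykson–Zuber type variables $I_k=\sum_{n\ge0}t_{n+k}\frac{v^n}{n!}$, $J_k=\sum_{n\ge0}t_{n+k+1}\sum_{i=0}^n\frac{v^ir^{2n-2i+1}}{i!(2n-2i+1)!!}+\sum_{n\ge0}\frac{s_{n+k}}{n!}\big(v+\frac{r^2}2\big)^n$,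 $k\ge0$. (One has $I_0=v$, $J_0=r$.) *)

theory Defs
  imports Complex_Main "HOL-Library.Poly_Mapping"
begin

text \<open>Formal power series over the rationals in the countably many formal
variables t_0, t_1, ... and s_0, s_1, ...  A series is its coefficient function
on monomials (finitely supported exponent maps).\<close>

datatype var = T nat | S nat

type_synonym monom = "var \<Rightarrow>\<^sub>0 nat"
type_synonym mfps = "monom \<Rightarrow> rat"

definition mconst :: "rat \<Rightarrow> mfps" where
  "mconst c = (\<lambda>m. if m = 0 then c else 0)"

definition mvar :: "var \<Rightarrow> mfps" where
  "mvar x = (\<lambda>m. if m = Poly_Mapping.single x 1 then 1 else 0)"

definition madd :: "mfps \<Rightarrow> mfps \<Rightarrow> mfps" where
  "madd f g = (\<lambda>m. f m + g m)"

definition msub :: "mfps \<Rightarrow> mfps \<Rightarrow> mfps" where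
  "msub f g = (\<lambda>m. f m - g m)"

definition msc :: "rat \<Rightarrow> mfps \<Rightarrow> mfps" where
  "msc c f = (\<lambda>m. c * f m)"

text \<open>Cauchy product (the index set is finite for every monomial m).\<close>
definition mmul :: "mfps \<Rightarrow> mfps \<Rightarrow> mfps" where
  "mmul f g = (\<lambda>m. \<Sum>p\<in>{p. fst p + snd p = m}. f (fst p) * g (snd p))"

definition mpow :: "mfps \<Rightarrow> nat \<Rightarrow> mfps" where
  "mpow f n = (mmul f ^^ n) (mconst 1)"

definition mfsum :: "(nat \<Rightarrow> mfps) \<Rightarrow> nat set \<Rightarrow> mfps" where
  "mfsum F A = (\<lambda>m. \<Sum>i\<in>A. F i m)"

text \<open>Formal (adic) infinite sum: coefficientwise, summing over the indices
contributing a nonzero coefficient (a finite set for every formally summable family).\<close>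
definition msuminf :: "(nat \<Rightarrow> mfps) \<Rightarrow> mfps" where
  "msuminf F = (\<lambda>m. \<Sum>n\<in>{n. F n m \<noteq> 0}. F n m)"

fun dfact :: "nat \<Rightarrow> nat" where
  "dfact 0 = 1"
| "dfact (Suc 0) = 1"
| "dfact (Suc (Suc n)) = Suc (Suc n) * dfact n"

definition tt :: "nat \<Rightarrow> mfps" where
  "tt n = msub (mvar (T n)) (mconst (if n = 1 then 1 else 0))"

definition Bsum :: "nat \<Rightarrow> mfps \<Rightarrow> mfps \<Rightarrow> mfps" where
  "Bsum n v r = mfsum (\<lambda>i. msc (1 / (of_nat (fact i) * of_nat (dfact (2*n - 2*i + 1))))
                                 (mmul (mpow v i) (mpow r (2*n - 2*i + 1)))) {..n}"

definition wvr :: "mfps \<Rightarrow> mfps \<Rightarrow> mfps" where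
  "wvr v r = madd v (msc (1/2) (mpow r 2))"

definition EL_v :: "mfps \<Rightarrow> mfps" where
  "EL_v v = msuminf (\<lambda>n. msc (1 / of_nat (fact n)) (mmul (tt n) (mpow v n)))"

definition EL_r :: "mfps \<Rightarrow> mfps \<Rightarrow> mfps" where
  "EL_r v r = madd (msuminf (\<lambda>n. mmul (tt (n+1)) (Bsum n v r)))
                   (msuminf (\<lambda>n. msc (1 / of_nat (fact n)) (mmul (mvar (S n)) (mpow (wvr v r) n))))"

definition vtop :: mfps where
  "vtop = (THE v. v 0 = 0 \<and> EL_v v = mconst 0)"

definition rtop :: mfps where
  "rtop = (THE r. r 0 = 0 \<and> EL_r vtop r = mconst 0)"

definition II :: "nat \<Rightarrow> mfps" where
  "II k = msuminf (\<lambda>n. msc (1 / of_nat (fact n)) (mmul (mvar (T (n+k))) (mpow vtop n)))"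

definition JJ :: "nat \<Rightarrow> mfps" where
  "JJ k = madd (msuminf (\<lambda>n. mmul (mvar (T (n+k+1))) (Bsum n vtop rtop)))
               (msuminf (\<lambda>n. msc (1 / of_nat (fact n)) (mmul (mvar (S (n+k))) (mpow (wvr vtop rtop) n))))"

end

theory Submission
  imports Defs "HOL-Computational_Algebra.Formal_Power_Series"
begin

text \<open>All series live in the ring of formal power series in the \<open>t\<^sub>n\<close>, \<open>s\<^sub>n\<close>, filtered by
  total degree. Over this ring let \<open>exp(az) = \<Sum>\<^sub>n a\<^sup>n z\<^sup>n / n!\<close> in an auxiliary variable \<open>z\<close>.
  Then \<open>I\<^sub>k = \<Sum>\<^sub>n [z\<^sup>n] exp(vz) t\<^sub>n\<^sub>+\<^sub>k\<close>, so in \<open>\<Sum>\<^sub>n [z\<^sup>n] exp(-vz) I\<^sub>n\<^sub>+\<^sub>k\<close> the coefficient of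
  \<open>t\<^sub>N\<^sub>+\<^sub>k\<close> is \<open>[z\<^sup>N] exp(-vz) exp(vz)\<close>, and only \<open>t\<^sub>k\<close> survives. With \<open>w = v + r\<^sup>2/2\<close> and
  \<open>S(z) = \<Sum>\<^sub>j r\<^bsup>2j+1\<^esup> z\<^sup>j / (2j+1)!!\<close> one has
  \<open>J\<^sub>k = \<Sum>\<^sub>n [z\<^sup>n] (exp(vz) S(z)) t\<^sub>n\<^sub>+\<^sub>k\<^sub>+\<^sub>1 + \<Sum>\<^sub>n [z\<^sup>n] exp(wz) s\<^sub>n\<^sub>+\<^sub>k\<close>, and the same bookkeeping
  turns the formula for \<open>s\<^sub>k\<close> into \<open>s\<^sub>k\<close> plus \<open>t\<close>-terms with coefficient series
  \<open>c(z) exp(vz) + exp(-wz) exp(vz) S(z)\<close>, where \<open>c(z)\<close> collects the coefficients of the formula.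
  These cancel because \<open>c(z) = -exp(-vz) exp(-r\<^sup>2z/2) S(z)\<close>, a convolution identity of rational
  numbers that telescopes. All infinite sums converge because their \<open>n\<close>-th terms have order at
  least \<open>n\<close>, and \<open>v\<close>, \<open>r\<close> exist and are unique because the Euler-Lagrange equations are
  fixed point equations of maps raising the order of differences.\<close>

section \<open>Formal power series in the variables \<open>t\<^sub>n\<close>, \<open>s\<^sub>n\<close>\<close>

definition splittings :: "monom \<Rightarrow> (monom \<times> monom) set" where
  "splittings m = {p. fst p + snd p = m}"

lemma finite_summands:
  fixes m :: "'a \<Rightarrow>\<^sub>0 nat"
  shows "finite {a. \<exists>b. a + b = m}"
proof (rule finite_imageD)
  let ?B = "\<Union>x\<in>Poly_Mapping.keys m. {..Poly_Mapping.lookup m x}"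
  let ?F = "{f. \<forall>x. (x \<in> Poly_Mapping.keys m \<longrightarrow> f x \<in> ?B) \<and> (x \<notin> Poly_Mapping.keys m \<longrightarrow> f x = 0)}"
  have "Poly_Mapping.lookup a \<in> ?F" if "a + b = m" for a b
  proof -
    have le: "Poly_Mapping.lookup a x \<le> Poly_Mapping.lookup m x" for x
      using that by (auto simp: lookup_add)
    show ?thesis
    proof (intro CollectI allI conjI impI)
      fix x
      show "x \<in> Poly_Mapping.keys m \<Longrightarrow> Poly_Mapping.lookup a x \<in> ?B"
        using le by blast
      show "x \<notin> Poly_Mapping.keys m \<Longrightarrow> Poly_Mapping.lookup a x = 0"
        using le[of x] by (simp add: in_keys_iff)
    qed
  qed
  then have "Poly_Mapping.lookup ` {a. \<exists>b. a + b = m} \<subseteq> ?F"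
    by (auto intro: image_subsetI simp del: mem_Collect_eq)
  then show "finite (Poly_Mapping.lookup ` {a. \<exists>b. a + b = m})"
    by (rule finite_subset) (intro finite_set_of_finite_funs; simp)
  show "inj_on Poly_Mapping.lookup {a. \<exists>b. a + b = m}"
    by (simp add: inj_on_def poly_mapping_eqI)
qed

lemma finite_splittings [simp]: "finite (splittings m)"
proof -
  have "splittings m = (\<lambda>a. (a, m - a)) ` {a. \<exists>b. a + b = m}"
    unfolding splittings_def by (auto simp: image_iff)
  then show ?thesis using finite_summands[of m] by simp
qed

datatype mps = MPS (mps_coeff: mfps)

lemma mps_eqI: "(\<And>m. mps_coeff a m = mps_coeff b m) \<Longrightarrow> a = b"
  by (cases a, cases b) auto

lemma MPS_mps_coeff [simp]: "MPS (mps_coeff a) = a"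
  by (cases a) auto

definition mps_const :: "rat \<Rightarrow> mps" where
  "mps_const c = MPS (mconst c)"

lemma mps_coeff_const: "mps_coeff (mps_const c) m = (if m = 0 then c else 0)"
  by (simp add: mps_const_def mconst_def)

instantiation mps :: comm_ring_1
begin

definition "0 = MPS (\<lambda>m. 0)"
definition "1 = mps_const 1"
definition "a + b = MPS (madd (mps_coeff a) (mps_coeff b))"
definition "a - b = MPS (msub (mps_coeff a) (mps_coeff b))"
definition "- a = MPS (\<lambda>m. - mps_coeff a m)"
definition "a * b = MPS (mmul (mps_coeff a) (mps_coeff b))"

lemma mps_coeff_zero [simp]: "mps_coeff 0 m = 0"
  by (simp add: zero_mps_def)

lemma mps_coeff_add [simp]: "mps_coeff (a + b) m = mps_coeff a m + mps_coeff b m"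
  by (simp add: plus_mps_def madd_def)

lemma mps_coeff_diff [simp]: "mps_coeff (a - b) m = mps_coeff a m - mps_coeff b m"
  by (simp add: minus_mps_def msub_def)

lemma mps_coeff_uminus [simp]: "mps_coeff (- a) m = - mps_coeff a m"
  by (simp add: uminus_mps_def)

lemma mps_coeff_mult:
  "mps_coeff (a * b) m = (\<Sum>p\<in>splittings m. mps_coeff a (fst p) * mps_coeff b (snd p))"
  by (simp add: times_mps_def mmul_def splittings_def)

lemma mps_mult_assoc: "(a * b) * c = a * (b * (c :: mps))"
proof (rule mps_eqI)
  fix m
  let ?a = "mps_coeff a" and ?b = "mps_coeff b" and ?c = "mps_coeff c"
  have "mps_coeff ((a * b) * c) m =
      (\<Sum>(p, q)\<in>Sigma (splittings m) (\<lambda>p. splittings (fst p)). ?a (fst q) * ?b (snd q) * ?c (snd p))"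
    by (simp add: mps_coeff_mult sum_distrib_right sum.Sigma split_beta)
  also have "\<dots> = (\<Sum>(p, q)\<in>Sigma (splittings m) (\<lambda>p. splittings (snd p)).
                    ?a (fst p) * (?b (fst q) * ?c (snd q)))"
    by (rule sum.reindex_bij_witness[where i="\<lambda>((u, y), (v, z)). ((u + v, z), (u, v))"
          and j="\<lambda>((x, z), (u, v)). ((u, v + z), (v, z))"])
       (auto simp: splittings_def add.assoc mult.assoc)
  also have "\<dots> = mps_coeff (a * (b * c)) m"
    by (simp add: mps_coeff_mult sum_distrib_left sum.Sigma split_beta)
  finally show "mps_coeff ((a * b) * c) m = mps_coeff (a * (b * c)) m" .
qed

lemma mps_mult_commute: "a * b = b * (a :: mps)"
  by (rule mps_eqI, unfold mps_coeff_mult)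
     (rule sum.reindex_bij_witness[where i=prod.swap and j=prod.swap],
      auto simp: splittings_def add.commute)

lemma mps_coeff_const_mult: "mps_coeff (mps_const c * f) m = c * mps_coeff f m"
proof -
  have "mps_coeff (mps_const c * f) m =
      (\<Sum>p\<in>{p \<in> splittings m. fst p = 0}. c * mps_coeff f (snd p))"
    unfolding mps_coeff_mult sum.inter_filter[OF finite_splittings]
    by (rule sum.cong) (auto simp: mps_coeff_const)
  also have "{p \<in> splittings m. fst p = 0} = {(0, m)}"
    by (auto simp: splittings_def)
  finally show ?thesis by simp
qed

instance
proof
  fix a b c :: mps
  show "a + b + c = a + (b + c)" "a + b = b + a" "0 + a = a" "- a + a = 0" "a - b = a + - b"
    by (auto intro: mps_eqI)
  show "a * b * c = a * (b * c)" "a * b = b * a"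
    by (fact mps_mult_assoc mps_mult_commute)+
  show "1 * a = a"
    by (rule mps_eqI) (simp add: one_mps_def mps_coeff_const_mult)
  show "(a + b) * c = a * c + b * c"
    by (rule mps_eqI) (simp add: mps_coeff_mult ring_distribs sum.distrib)
  show "(0 :: mps) \<noteq> 1"
    by (simp add: zero_mps_def one_mps_def mps_const_def mconst_def fun_eq_iff)
qed

end

lemma mps_coeff_sum: "mps_coeff (sum F A) m = (\<Sum>i\<in>A. mps_coeff (F i) m)"
  by (induction A rule: infinite_finite_induct) simp_all

section \<open>Order and adic summation\<close>

definition total_degree :: "monom \<Rightarrow> nat" where
  "total_degree m = (\<Sum>x\<in>Poly_Mapping.keys m. Poly_Mapping.lookup m x)"

lemma total_degree_add: "total_degree (a + b) = total_degree a + total_degree b"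
  unfolding total_degree_def by (rule setsum_keys_plus_distrib) auto

lemma total_degree_eq_0_iff: "total_degree m = 0 \<longleftrightarrow> m = 0"
proof
  assume "total_degree m = 0"
  then have "\<And>x. Poly_Mapping.lookup m x = 0"
    by (metis total_degree_def finite_keys sum_eq_0_iff in_keys_iff)
  then show "m = 0" by (intro poly_mapping_eqI) simp
qed (simp add: total_degree_def)

lemma total_degree_splitting:
  "p \<in> splittings m \<Longrightarrow> total_degree (fst p) + total_degree (snd p) = total_degree m"
  by (auto simp: splittings_def total_degree_add[symmetric])

definition order_ge :: "mps \<Rightarrow> nat \<Rightarrow> bool" where
  "order_ge f d \<longleftrightarrow> (\<forall>m. total_degree m < d \<longrightarrow> mps_coeff f m = 0)"

lemma order_ge_0 [simp]: "order_ge f 0"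
  by (simp add: order_ge_def)

lemma order_ge_zero [simp]: "order_ge 0 d"
  by (simp add: order_ge_def)

lemma order_ge_1_iff: "order_ge f 1 \<longleftrightarrow> mps_coeff f 0 = 0"
  by (auto simp: order_ge_def total_degree_eq_0_iff)

lemma order_ge_mono: "order_ge f d \<Longrightarrow> e \<le> d \<Longrightarrow> order_ge f e"
  by (auto simp: order_ge_def)

lemma order_ge_add: "order_ge f d \<Longrightarrow> order_ge g d \<Longrightarrow> order_ge (f + g) d"
  by (auto simp: order_ge_def)

lemma order_ge_diff: "order_ge f d \<Longrightarrow> order_ge g d \<Longrightarrow> order_ge (f - g) d"
  by (auto simp: order_ge_def)

lemma order_ge_uminus: "order_ge f d \<Longrightarrow> order_ge (- f) d"
  by (auto simp: order_ge_def)

lemma order_ge_sum: "(\<And>i. i \<in> A \<Longrightarrow> order_ge (F i) d) \<Longrightarrow> order_ge (sum F A) d"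
  by (induction A rule: infinite_finite_induct) (auto intro: order_ge_add)

lemma order_ge_mult:
  assumes "order_ge f i" "order_ge g j" "d \<le> i + j"
  shows "order_ge (f * g) d"
  unfolding order_ge_def mps_coeff_mult
proof (intro allI impI sum.neutral ballI)
  fix m p
  assume "total_degree m < d" and p: "p \<in> splittings m"
  with total_degree_splitting[OF p] assms(3)
  have "total_degree (fst p) < i \<or> total_degree (snd p) < j" by linarith
  with assms(1,2) show "mps_coeff f (fst p) * mps_coeff g (snd p) = 0"
    by (auto simp: order_ge_def)
qed

lemma order_ge_mult_left: "order_ge g d \<Longrightarrow> order_ge (f * g) d"
  using order_ge_mult[OF order_ge_0, of g d d f] by simp

lemma order_ge_mult_right: "order_ge f d \<Longrightarrow> order_ge (f * g) d"
  using order_ge_mult[OF _ order_ge_0, of f d d g] by simp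

lemma order_ge_power: "order_ge f 1 \<Longrightarrow> order_ge (f ^ n) n"
  by (induction n) (auto intro: order_ge_mult)

lemma order_ge_power_diff: "order_ge (a - b) d \<Longrightarrow> order_ge (a ^ n - b ^ n) d"
proof (induction n)
  case (Suc n)
  have "a ^ Suc n - b ^ Suc n = a * (a ^ n - b ^ n) + (a - b) * b ^ n"
    by (simp add: algebra_simps)
  moreover have "order_ge (a * (a ^ n - b ^ n)) d"
    by (rule order_ge_mult_left[OF Suc.IH[OF Suc.prems]])
  moreover have "order_ge ((a - b) * b ^ n) d"
    by (rule order_ge_mult_right[OF Suc.prems])
  ultimately show ?case by (simp add: order_ge_add)
qed simp

lemma order_ge_eqI: "(\<And>d. order_ge (a - b) d) \<Longrightarrow> a = b"
proof (rule mps_eqI)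
  fix m
  assume "\<And>d. order_ge (a - b) d"
  then have "order_ge (a - b) (Suc (total_degree m))" .
  then show "mps_coeff a m = mps_coeff b m" by (simp add: order_ge_def)
qed

definition mps_var :: "var \<Rightarrow> mps" where
  "mps_var x = MPS (mvar x)"

lemma mps_const_mult: "mps_const (a * b) = mps_const a * mps_const b"
  by (rule mps_eqI) (simp add: mps_coeff_const_mult mps_coeff_const)

lemma mps_const_add: "mps_const (a + b) = mps_const a + mps_const b"
  by (rule mps_eqI) (simp add: mps_coeff_const)

lemma mps_const_uminus: "mps_const (- a) = - mps_const a"
  by (rule mps_eqI) (simp add: mps_coeff_const)

lemma mps_const_0 [simp]: "mps_const 0 = 0"
  by (rule mps_eqI) (simp add: mps_coeff_const)

lemma mps_const_1 [simp]: "mps_const 1 = 1"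
  by (simp add: one_mps_def)

lemma mps_const_power: "mps_const (a ^ n) = mps_const a ^ n"
  by (induction n) (simp_all add: mps_const_mult)

lemma mps_const_of_nat: "mps_const (of_nat n) = of_nat n"
  by (induction n) (simp_all add: mps_const_add)

lemma mps_const_sum: "mps_const (sum f A) = (\<Sum>i\<in>A. mps_const (f i))"
  by (induction A rule: infinite_finite_induct) (simp_all add: mps_const_add)

lemma order_ge_const_mult: "order_ge f d \<Longrightarrow> order_ge (mps_const c * f) d"
  by (simp add: order_ge_def mps_coeff_const_mult)

lemma order_ge_var: "order_ge (mps_var x) 1"
proof -
  have "Poly_Mapping.single x (1 :: nat) \<noteq> 0"
    by (metis lookup_single_eq lookup_zero one_neq_zero)
  then show ?thesis
    unfolding order_ge_1_iff by (auto simp: mps_var_def mvar_def)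
qed

definition adic_sum :: "(nat \<Rightarrow> mps) \<Rightarrow> mps" where
  "adic_sum F = MPS (\<lambda>m. \<Sum>n\<le>total_degree m. mps_coeff (F n) m)"

text \<open>\<open>adic_sum\<close> truncates each coefficient at the total degree of the monomial; for adic
  summable families, whose \<open>n\<close>-th member vanishes below degree \<open>n\<close>, this is the genuine sum.\<close>

definition adic_summable :: "(nat \<Rightarrow> mps) \<Rightarrow> bool" where
  "adic_summable F \<longleftrightarrow> (\<forall>n. order_ge (F n) n)"

lemma mps_coeff_adic_sum:
  assumes "adic_summable F" "total_degree m \<le> N"
  shows "mps_coeff (adic_sum F) m = (\<Sum>n\<le>N. mps_coeff (F n) m)"
  unfolding adic_sum_def mps.sel
  by (rule sum.mono_neutral_left) (use assms in \<open>auto simp: adic_summable_def order_ge_def\<close>)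

lemma msuminf_eq_adic_sum:
  assumes "adic_summable F"
  shows "msuminf (\<lambda>n. mps_coeff (F n)) = mps_coeff (adic_sum F)"
proof
  fix m
  have "msuminf (\<lambda>n. mps_coeff (F n)) m = (\<Sum>n\<in>{n. mps_coeff (F n) m \<noteq> 0}. mps_coeff (F n) m)"
    by (simp add: msuminf_def)
  also have "\<dots> = (\<Sum>n\<le>total_degree m. mps_coeff (F n) m)"
    by (rule sum.mono_neutral_left)
       (use assms in \<open>auto simp: adic_summable_def order_ge_def not_le[symmetric]\<close>)
  finally show "msuminf (\<lambda>n. mps_coeff (F n)) m = mps_coeff (adic_sum F) m"
    by (simp add: adic_sum_def)
qed

lemma adic_summable_mult_right: "adic_summable F \<Longrightarrow> adic_summable (\<lambda>n. F n * G n)"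
  by (simp add: adic_summable_def order_ge_mult_right)

lemma adic_sum_add: "adic_sum (\<lambda>n. F n + G n) = adic_sum F + adic_sum G"
  by (rule mps_eqI) (simp add: adic_sum_def sum.distrib)

lemma adic_sum_diff: "adic_sum (\<lambda>n. F n - G n) = adic_sum F - adic_sum G"
  by (rule mps_eqI) (simp add: adic_sum_def sum_subtractf)

lemma adic_sum_zero [simp]: "adic_sum (\<lambda>n. 0) = 0"
  by (rule mps_eqI) (simp add: adic_sum_def)

lemma order_ge_adic_sum: "(\<And>n. order_ge (F n) d) \<Longrightarrow> order_ge (adic_sum F) d"
  by (auto simp: order_ge_def adic_sum_def)

lemma adic_sum_mult_left:
  assumes "adic_summable F"
  shows "a * adic_sum F = adic_sum (\<lambda>n. a * F n)"
proof (rule mps_eqI)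
  fix m
  let ?N = "total_degree m"
  have "mps_coeff (a * adic_sum F) m =
      (\<Sum>p\<in>splittings m. mps_coeff a (fst p) * (\<Sum>n\<le>?N. mps_coeff (F n) (snd p)))"
    unfolding mps_coeff_mult
    by (intro sum.cong refl arg_cong2[where f="(*)"] mps_coeff_adic_sum[OF assms])
       (use total_degree_splitting in fastforce)
  also have "\<dots> = mps_coeff (adic_sum (\<lambda>n. a * F n)) m"
    by (simp add: adic_sum_def mps_coeff_mult sum_distrib_left sum.swap[of _ "splittings m"])
  finally show "mps_coeff (a * adic_sum F) m = mps_coeff (adic_sum (\<lambda>n. a * F n)) m" .
qed

lemma adic_sum_single:
  assumes "order_ge a j"
  shows "adic_sum (\<lambda>n. if n = j then a else 0) = a"
proof (rule mps_eqI)
  fix m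
  have "mps_coeff (if n = j then a else 0) m = (if n = j then mps_coeff a m else 0)" for n
    by simp
  then show "mps_coeff (adic_sum (\<lambda>n. if n = j then a else 0)) m = mps_coeff a m"
    using assms by (cases "j \<le> total_degree m") (simp_all add: adic_sum_def order_ge_def)
qed

lemma adic_sum_diagonal:
  assumes "\<And>n j. order_ge (H n j) (n + j)"
  shows "adic_sum (\<lambda>n. adic_sum (H n)) = adic_sum (\<lambda>N. \<Sum>n\<le>N. H n (N - n))"
proof (rule mps_eqI)
  fix m
  let ?N = "total_degree m"
  have "adic_summable (H n)" for n
    unfolding adic_summable_def by (metis assms order_ge_mono le_add2)
  then have "mps_coeff (adic_sum (\<lambda>n. adic_sum (H n))) m =
      (\<Sum>(n, j)\<in>{..?N} \<times> {..?N}. mps_coeff (H n j) m)"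
    by (simp add: adic_sum_def mps_coeff_adic_sum sum.cartesian_product)
  also have "\<dots> = (\<Sum>(n, j)\<in>{(n, j). n + j \<le> ?N}. mps_coeff (H n j) m)"
    by (rule sum.mono_neutral_right) (auto, meson assms order_ge_def not_le)
  also have "\<dots> = mps_coeff (adic_sum (\<lambda>N. \<Sum>n\<le>N. H n (N - n))) m"
    by (simp add: adic_sum_def mps_coeff_sum sum.triangle_reindex_eq)
  finally show "mps_coeff (adic_sum (\<lambda>n. adic_sum (H n))) m =
      mps_coeff (adic_sum (\<lambda>N. \<Sum>n\<le>N. H n (N - n))) m" .
qed

lemma adic_summable_fps_mult:
  assumes "adic_summable (fps_nth a)" "adic_summable (fps_nth b)"
  shows "adic_summable (fps_nth (a * b))"
  using assms unfolding adic_summable_def fps_mult_nth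
  by (auto intro!: order_ge_sum order_ge_mult)

lemma adic_summable_fps_uminus: "adic_summable (fps_nth a) \<Longrightarrow> adic_summable (fps_nth (- a))"
  by (simp add: adic_summable_def order_ge_uminus)

lemma adic_sum_convolution:
  assumes a: "adic_summable (fps_nth a)" and b: "adic_summable (fps_nth b)"
  shows "adic_sum (\<lambda>n. fps_nth a n * adic_sum (\<lambda>j. fps_nth b j * x (n + j))) =
         adic_sum (\<lambda>N. fps_nth (a * b) N * x N)"
proof -
  have bx: "order_ge (fps_nth b j * x (n + j)) j" for n j
    using b by (simp add: adic_summable_def order_ge_mult_right)
  then have "adic_summable (\<lambda>j. fps_nth b j * x (n + j))" for n
    by (simp add: adic_summable_def)
  then have "adic_sum (\<lambda>n. fps_nth a n * adic_sum (\<lambda>j. fps_nth b j * x (n + j))) =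
      adic_sum (\<lambda>n. adic_sum (\<lambda>j. fps_nth a n * (fps_nth b j * x (n + j))))"
    by (simp add: adic_sum_mult_left)
  also have "\<dots> = adic_sum (\<lambda>N. \<Sum>n\<le>N. fps_nth a n * (fps_nth b (N - n) * x (n + (N - n))))"
    by (rule adic_sum_diagonal)
       (use order_ge_mult[OF _ bx] a in \<open>metis adic_summable_def order_refl\<close>)
  also have "\<dots> = adic_sum (\<lambda>N. fps_nth (a * b) N * x N)"
    by (simp add: fps_mult_nth atLeast0AtMost sum_distrib_right mult.assoc)
  finally show ?thesis .
qed

lemma adic_sum_fps_one: "adic_sum (\<lambda>n. fps_nth 1 n * x n) = x 0"
proof -
  have "(\<lambda>n. fps_nth 1 n * x n) = (\<lambda>n. if n = 0 then x 0 else 0)"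
    by auto
  then show ?thesis by (simp add: adic_sum_single)
qed

lemma adic_limit_exists:
  assumes step: "\<And>j. order_ge (x (Suc j) - x j) j"
  shows "\<exists>v. \<forall>j. order_ge (v - x j) j"
proof -
  have "order_ge (x (j + i) - x j) j" for i j
  proof (induction i)
    case (Suc i)
    have "x (j + Suc i) - x j = (x (Suc (j + i)) - x (j + i)) + (x (j + i) - x j)"
      by simp
    moreover have "order_ge (x (Suc (j + i)) - x (j + i)) j"
      by (rule order_ge_mono[OF step]) simp
    ultimately show ?case
      using Suc.IH by (metis order_ge_add)
  qed simp
  then have agree: "mps_coeff (x i) m = mps_coeff (x j) m" if "j \<le> i" "total_degree m < j" for i j m
    using that by (metis le_add_diff_inverse order_ge_def diff_eq_eq add_0 mps_coeff_diff)
  define v where "v = MPS (\<lambda>m. mps_coeff (x (Suc (total_degree m))) m)"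
  have "order_ge (v - x j) j" for j
    unfolding order_ge_def
  proof (intro allI impI)
    fix m
    assume "total_degree m < j"
    then show "mps_coeff (v - x j) m = 0"
      using agree[of "Suc (total_degree m)" j m] by (simp add: v_def)
  qed
  then show ?thesis by blast
qed

lemma contraction_unique_fixpoint:
  assumes contr: "\<And>a b d. order_ge (a - b) d \<Longrightarrow> order_ge (\<Phi> a - \<Phi> b) (Suc d)"
  shows "\<exists>!v. \<Phi> v = v"
proof -
  define x where "x j = (\<Phi> ^^ j) 0" for j
  have "order_ge (x (Suc j) - x j) j" for j
    by (induction j) (simp_all add: x_def contr)
  then obtain v where v: "\<And>j. order_ge (v - x j) j"
    using adic_limit_exists by blast
  have "order_ge (\<Phi> v - v) d" for d
  proof (cases d)
    case (Suc j)
    have "\<Phi> v - v = (\<Phi> v - \<Phi> (x j)) - (v - x (Suc j))"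
      by (simp add: x_def)
    moreover have "order_ge (\<Phi> v - \<Phi> (x j)) (Suc j)"
      using contr[OF v] .
    ultimately show ?thesis
      using v[of "Suc j"] Suc by (metis order_ge_diff)
  qed simp
  then have fixpoint: "\<Phi> v = v" by (rule order_ge_eqI)
  have "w = v" if "\<Phi> w = w" for w
  proof (rule order_ge_eqI)
    show "order_ge (w - v) d" for d
    proof (induction d)
      case (Suc d)
      show ?case using contr[OF Suc.IH] that fixpoint by simp
    qed simp
  qed
  with fixpoint show ?thesis by blast
qed

section \<open>Exponential generating series\<close>

definition exp_fps :: "mps \<Rightarrow> mps fps" where
  "exp_fps a = Abs_fps (\<lambda>n. mps_const (1 / fact n) * a ^ n)"

lemma mps_const_binomial:
  assumes "k \<le> n"
  shows "mps_const (1 / fact n) * of_nat (n choose k) = mps_const (1 / fact k) * mps_const (1 / fact (n - k))"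
proof -
  have "1 / fact n * (of_nat (n choose k) :: rat) = 1 / fact k * (1 / fact (n - k))"
    using assms by (simp add: binomial_fact field_simps)
  then show ?thesis
    by (metis mps_const_mult mps_const_of_nat)
qed

lemma exp_fps_add: "exp_fps a * exp_fps b = exp_fps (a + b)"
proof (rule fps_ext)
  fix n
  have "fps_nth (exp_fps a * exp_fps b) n =
      (\<Sum>i\<le>n. mps_const (1 / fact i) * a ^ i * (mps_const (1 / fact (n - i)) * b ^ (n - i)))"
    by (simp add: fps_mult_nth exp_fps_def atLeast0AtMost)
  also have "\<dots> = (\<Sum>i\<le>n. mps_const (1 / fact n) * (of_nat (n choose i) * a ^ i * b ^ (n - i)))"
    by (rule sum.cong) (auto simp: mps_const_binomial[symmetric] algebra_simps)
  also have "\<dots> = fps_nth (exp_fps (a + b)) n"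
    by (simp add: exp_fps_def binomial_ring sum_distrib_left)
  finally show "fps_nth (exp_fps a * exp_fps b) n = fps_nth (exp_fps (a + b)) n" .
qed

lemma exp_fps_neg_mult: "exp_fps (- a) * exp_fps a = 1"
proof -
  have "exp_fps 0 = 1"
    by (rule fps_ext) (simp add: exp_fps_def power_0_left)
  then show ?thesis by (simp add: exp_fps_add)
qed

lemma fps_nth_exp_fps_const_mult:
  "fps_nth (exp_fps (mps_const c * a)) n = mps_const (c ^ n / fact n) * a ^ n"
  by (simp add: exp_fps_def power_mult_distrib mult.assoc[symmetric]
      flip: mps_const_power mps_const_mult)

lemma fps_nth_exp_fps_neg: "fps_nth (exp_fps (- a)) n = mps_const ((-1) ^ n / fact n) * a ^ n"
  using fps_nth_exp_fps_const_mult[of "-1" a n] by (simp add: mps_const_uminus)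

lemma fps_nth_exp_fps_neg_mult:
  "mps_const ((-1) ^ n / fact n) * (a ^ n * y) = fps_nth (exp_fps (- a)) n * y"
  by (simp add: fps_nth_exp_fps_neg mult.assoc)

lemma adic_summable_exp_fps: "order_ge a 1 \<Longrightarrow> adic_summable (fps_nth (exp_fps a))"
  by (simp add: adic_summable_def exp_fps_def order_ge_const_mult order_ge_power)

lemma order_ge_exp_fps_nth_diff:
  "order_ge (a - b) d \<Longrightarrow> order_ge (fps_nth (exp_fps a) n - fps_nth (exp_fps b) n) d"
  by (simp add: exp_fps_def flip: right_diff_distrib)
     (intro order_ge_const_mult order_ge_power_diff)

definition odd_fps :: "mps \<Rightarrow> mps fps" where
  "odd_fps r = Abs_fps (\<lambda>j. mps_const (1 / of_nat (dfact (2*j + 1))) * r ^ (2*j + 1))"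

lemma adic_summable_odd_fps:
  assumes "order_ge r 1"
  shows "adic_summable (fps_nth (odd_fps r))"
  unfolding adic_summable_def odd_fps_def fps_nth_Abs_fps
proof
  fix n
  have "order_ge (r ^ (2*n + 1)) (2*n + 1)"
    using assms by (rule order_ge_power)
  then have "order_ge (r ^ (2*n + 1)) n"
    by (rule order_ge_mono) simp
  then show "order_ge (mps_const (1 / of_nat (dfact (2*n + 1))) * r ^ (2*n + 1)) n"
    by (rule order_ge_const_mult)
qed

lemma order_ge_odd_fps_nth_diff:
  "order_ge (a - b) d \<Longrightarrow> order_ge (fps_nth (odd_fps a) n - fps_nth (odd_fps b) n) d"
  by (simp only: odd_fps_def fps_nth_Abs_fps flip: right_diff_distrib)
     (intro order_ge_const_mult order_ge_power_diff)

lemma dfact_odd_Suc: "dfact (2 * Suc b + 1) = (2 * Suc b + 1) * dfact (2*b + 1)"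
  by (simp add: numeral_2_eq_2)

lemma convolution_telescope:
  fixes e s :: "nat \<Rightarrow> 'a :: field_char_0"
  assumes s_Suc: "\<And>b. s (Suc b) * (2 * of_nat (Suc b) + 1) = s b"
    and e_Suc: "\<And>a. 2 * of_nat (Suc a) * e (Suc a) = - e a"
    and s_0: "s 0 = 1"
  shows "(\<Sum>a\<le>j. e a * s (j - a)) * (2 * of_nat j + 1) = e j"
proof (cases j)
  case (Suc i)
  have "(\<Sum>a\<le>Suc i. e a * s (Suc i - a)) * (2 * of_nat (Suc i) + 1) =
      (\<Sum>a\<le>Suc i. e a * (s (Suc i - a) * (2 * of_nat (Suc i - a) + 1))) +
      (\<Sum>a\<le>Suc i. 2 * of_nat a * e a * s (Suc i - a))"
    unfolding sum_distrib_right sum.distrib[symmetric]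
    by (rule sum.cong) (auto simp: of_nat_diff algebra_simps)
  also have "(\<Sum>a\<le>Suc i. e a * (s (Suc i - a) * (2 * of_nat (Suc i - a) + 1))) =
      (\<Sum>a\<le>i. e a * s (i - a)) + e (Suc i)"
  proof -
    have "(\<Sum>a\<le>i. e a * (s (Suc i - a) * (2 * of_nat (Suc i - a) + 1))) = (\<Sum>a\<le>i. e a * s (i - a))"
      by (rule sum.cong) (simp_all only: atMost_iff Suc_diff_le s_Suc)
    then show ?thesis
      by (simp add: s_0)
  qed
  also have "(\<Sum>a\<le>Suc i. 2 * of_nat a * e a * s (Suc i - a)) =
      (\<Sum>a\<le>i. 2 * of_nat (Suc a) * e (Suc a) * s (Suc i - Suc a))"
    by (subst sum.atMost_Suc_shift) (simp del: of_nat_Suc)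
  also have "\<dots> = - (\<Sum>a\<le>i. e a * s (i - a))"
    by (simp only: e_Suc diff_Suc_Suc mult_minus_left sum_negf)
  finally show ?thesis using Suc by simp
qed (simp add: s_0)

lemma inverse_dfact_odd_Suc:
  "1 / of_nat (dfact (2 * Suc b + 1)) * (2 * of_nat (Suc b) + 1) = (1 / of_nat (dfact (2*b + 1)) :: rat)"
proof -
  have cancel: "x \<noteq> 0 \<Longrightarrow> 1 / (x * y) * x = 1 / y" for x y :: rat
    by (cases "y = 0") simp_all
  have "(2 * of_nat (Suc b) + 1 :: rat) = of_nat (2 * Suc b + 1)"
    by simp
  then show ?thesis
    using cancel[of "of_nat (2 * Suc b + 1)"]
    by (simp only: dfact_odd_Suc of_nat_mult of_nat_eq_0_iff)
qed

text \<open>The coefficient identity behind \<open>exp(-r\<^sup>2z/2) \<cdot> odd_fps r = \<Sum>\<^sub>j (-1)\<^sup>j r\<^bsup>2j+1\<^esup> z\<^sup>j / (2\<^sup>j j! (2j+1))\<close>.\<close>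

lemma exp_odd_dfact_convolution:
  "(\<Sum>a\<le>j. (-1/2) ^ a / fact a * (1 / of_nat (dfact (2 * (j - a) + 1)))) =
   ((-1) ^ j / (2 ^ j * fact j * of_nat (2*j + 1)) :: rat)"
proof -
  have "(\<Sum>a\<le>j. (-1/2) ^ a / fact a * (1 / of_nat (dfact (2 * (j - a) + 1)))) * (2 * of_nat j + 1) =
      ((-1/2) ^ j / fact j :: rat)"
    by (rule convolution_telescope[where e="\<lambda>a. (-1/2) ^ a / fact a"
          and s="\<lambda>b. 1 / of_nat (dfact (2*b + 1))"])
       (rule inverse_dfact_odd_Suc, simp_all add: field_simps del: of_nat_Suc)
  moreover have "(2 * of_nat j + 1 :: rat) \<noteq> 0"
    by (metis of_nat_Suc of_nat_eq_0_iff of_nat_mult of_nat_numeral add.commute nat.distinct(1))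
  ultimately show ?thesis
    by (simp add: eq_divide_eq power_minus[of "1/2"] power_one_over mult_ac add.commute)
qed

lemma exp_gaussian_odd_fps:
  "exp_fps (- (mps_const (1/2) * r ^ 2)) * odd_fps r =
   Abs_fps (\<lambda>j. mps_const ((-1) ^ j / (2 ^ j * fact j * of_nat (2*j + 1))) * r ^ (2*j + 1))"
proof (rule fps_ext)
  fix j
  have "fps_nth (exp_fps (mps_const (- 1/2) * r ^ 2) * odd_fps r) j =
      (\<Sum>a\<le>j. mps_const ((-1/2) ^ a / fact a * (1 / of_nat (dfact (2 * (j - a) + 1)))) * r ^ (2*j + 1))"
    unfolding fps_mult_nth atLeast0AtMost
  proof (rule sum.cong)
    fix a
    assume "a \<in> {..j}"
    then have "2*j + 1 = 2*a + (2 * (j - a) + 1)"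
      by simp
    then have split: "r ^ (2*j + 1) = r ^ (2*a) * r ^ (2 * (j - a) + 1)"
      by (metis power_add)
    show "fps_nth (exp_fps (mps_const (- 1/2) * r ^ 2)) a * fps_nth (odd_fps r) (j - a) =
        mps_const ((-1/2) ^ a / fact a * (1 / of_nat (dfact (2 * (j - a) + 1)))) * r ^ (2*j + 1)"
      unfolding fps_nth_exp_fps_const_mult odd_fps_def fps_nth_Abs_fps mps_const_mult split
        power_mult[symmetric]
      by (simp only: mult_ac)
  qed simp
  also have "\<dots> = mps_const ((-1) ^ j / (2 ^ j * fact j * of_nat (2*j + 1))) * r ^ (2*j + 1)"
    by (simp only: sum_distrib_right[symmetric] mps_const_sum[symmetric] exp_odd_dfact_convolution)
  finally show "fps_nth (exp_fps (- (mps_const (1/2) * r ^ 2)) * odd_fps r) j =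
      fps_nth (Abs_fps (\<lambda>j. mps_const ((-1) ^ j / (2 ^ j * fact j * of_nat (2*j + 1))) * r ^ (2*j + 1))) j"
    by (simp add: mps_const_uminus)
qed

section \<open>The inversion formulas\<close>

definition wser :: "mps \<Rightarrow> mps \<Rightarrow> mps" where
  "wser v r = v + mps_const (1/2) * r ^ 2"

definition sinv_fps :: "mps \<Rightarrow> mps \<Rightarrow> mps fps" where
  "sinv_fps v r = - (exp_fps (- v) * (exp_fps (- (mps_const (1/2) * r ^ 2)) * odd_fps r))"

lemma order_ge_wser: "order_ge v 1 \<Longrightarrow> order_ge r 1 \<Longrightarrow> order_ge (wser v r) 1"
  unfolding wser_def
  by (intro order_ge_add order_ge_const_mult order_ge_mono[OF order_ge_power]) simp_all

lemma adic_summable_sinv_fps: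
  "order_ge v 1 \<Longrightarrow> order_ge r 1 \<Longrightarrow> adic_summable (fps_nth (sinv_fps v r))"
  unfolding sinv_fps_def
  by (intro adic_summable_fps_mult adic_summable_fps_uminus adic_summable_exp_fps
      adic_summable_odd_fps order_ge_uminus order_ge_const_mult order_ge_mono[OF order_ge_power]; simp)

lemma sinv_fps_cancel:
  "sinv_fps v r * exp_fps v + exp_fps (- wser v r) * (exp_fps v * odd_fps r) = 0"
proof -
  have "exp_fps (- wser v r) = exp_fps (- v) * exp_fps (- (mps_const (1/2) * r ^ 2))"
    by (simp add: exp_fps_add wser_def)
  then show ?thesis
    by (simp add: sinv_fps_def algebra_simps exp_fps_neg_mult)
qed

lemma fps_nth_sinv_fps:
  "fps_nth (sinv_fps v r) n =
   (\<Sum>i\<le>n. mps_const ((-1) ^ (n+1) / (2 ^ (n-i) * fact i * fact (n-i) * of_nat (2*n - 2*i + 1))) *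
       (v ^ i * r ^ (2*n - 2*i + 1)))"
  unfolding sinv_fps_def exp_gaussian_odd_fps fps_neg_nth fps_mult_nth atLeast0AtMost
    sum_negf[symmetric]
proof (rule sum.cong)
  fix i
  assume "i \<in> {..n}"
  then obtain j where n: "n = i + j" by (metis atMost_iff le_iff_add)
  have "((-1) ^ (n+1) / (2 ^ (n-i) * fact i * fact (n-i) * of_nat (2*n - 2*i + 1)) :: rat) =
      - ((-1) ^ i / fact i * ((-1) ^ j / (2 ^ j * fact j * of_nat (2*j + 1))))"
    unfolding n by (simp add: power_add field_simps)
  then have c: "mps_const ((-1) ^ (n+1) / (2 ^ (n-i) * fact i * fact (n-i) * of_nat (2*n - 2*i + 1))) =
      - (mps_const ((-1) ^ i / fact i) * mps_const ((-1) ^ j / (2 ^ j * fact j * of_nat (2*j + 1))))"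
    by (simp only: mps_const_mult mps_const_uminus)
  show "- (fps_nth (exp_fps (- v)) i *
        fps_nth (Abs_fps (\<lambda>j. mps_const ((-1) ^ j / (2 ^ j * fact j * of_nat (2*j + 1))) * r ^ (2*j + 1))) (n - i)) =
     mps_const ((-1) ^ (n+1) / (2 ^ (n-i) * fact i * fact (n-i) * of_nat (2*n - 2*i + 1))) *
       (v ^ i * r ^ (2*n - 2*i + 1))"
    unfolding c by (simp add: n fps_nth_exp_fps_neg mult_ac)
qed simp

definition Iser :: "nat \<Rightarrow> mps \<Rightarrow> mps" where
  "Iser k v = adic_sum (\<lambda>n. fps_nth (exp_fps v) n * mps_var (T (n + k)))"

definition Jser :: "nat \<Rightarrow> mps \<Rightarrow> mps \<Rightarrow> mps" where
  "Jser k v r =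
     adic_sum (\<lambda>n. fps_nth (exp_fps v * odd_fps r) n * mps_var (T (n + k + 1))) +
     adic_sum (\<lambda>n. fps_nth (exp_fps (wser v r)) n * mps_var (S (n + k)))"

lemma T_inversion:
  assumes v: "order_ge v 1"
  shows "mps_var (T k) = adic_sum (\<lambda>n. fps_nth (exp_fps (- v)) n * Iser (n + k) v)"
proof -
  let ?t = "\<lambda>N. mps_var (T (N + k))"
  have "adic_sum (\<lambda>n. fps_nth (exp_fps (- v)) n * Iser (n + k) v) =
      adic_sum (\<lambda>n. fps_nth (exp_fps (- v)) n * adic_sum (\<lambda>j. fps_nth (exp_fps v) j * ?t (n + j)))"
    by (simp add: Iser_def add_ac)
  also have "\<dots> = adic_sum (\<lambda>N. fps_nth (exp_fps (- v) * exp_fps v) N * ?t N)"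
    by (intro adic_sum_convolution adic_summable_exp_fps order_ge_uminus v)
  also have "\<dots> = mps_var (T k)"
    by (simp only: exp_fps_neg_mult adic_sum_fps_one add_0)
  finally show ?thesis ..
qed

lemma S_inversion:
  assumes v: "order_ge v 1" and r: "order_ge r 1"
  shows "mps_var (S k) =
    adic_sum (\<lambda>n. fps_nth (sinv_fps v r) n * Iser (n + k + 1) v) +
    adic_sum (\<lambda>n. fps_nth (exp_fps (- wser v r)) n * Jser (n + k) v r)"
proof -
  let ?b = "exp_fps v * odd_fps r" and ?e = "exp_fps (- wser v r)"
  let ?t = "\<lambda>N. mps_var (T (N + k + 1))" and ?s = "\<lambda>N. mps_var (S (N + k))"
  have w: "order_ge (wser v r) 1"
    using v r by (rule order_ge_wser)
  have "adic_sum (\<lambda>n. fps_nth (sinv_fps v r) n * Iser (n + k + 1) v) =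
      adic_sum (\<lambda>n. fps_nth (sinv_fps v r) n * adic_sum (\<lambda>j. fps_nth (exp_fps v) j * ?t (n + j)))"
    by (simp add: Iser_def add_ac)
  also have "\<dots> = adic_sum (\<lambda>N. fps_nth (sinv_fps v r * exp_fps v) N * ?t N)"
    by (intro adic_sum_convolution adic_summable_sinv_fps adic_summable_exp_fps v r)
  finally have t_part: "adic_sum (\<lambda>n. fps_nth (sinv_fps v r) n * Iser (n + k + 1) v) =
      adic_sum (\<lambda>N. fps_nth (sinv_fps v r * exp_fps v) N * ?t N)" .
  have "adic_sum (\<lambda>n. fps_nth ?e n * Jser (n + k) v r) =
      adic_sum (\<lambda>n. fps_nth ?e n * adic_sum (\<lambda>j. fps_nth ?b j * ?t (n + j))) +
      adic_sum (\<lambda>n. fps_nth ?e n * adic_sum (\<lambda>j. fps_nth (exp_fps (wser v r)) j * ?s (n + j)))"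
    by (simp add: Jser_def distrib_left adic_sum_add add_ac)
  also have "\<dots> = adic_sum (\<lambda>N. fps_nth (?e * ?b) N * ?t N) +
      adic_sum (\<lambda>N. fps_nth (?e * exp_fps (wser v r)) N * ?s N)"
    by (intro arg_cong2[where f="(+)"] adic_sum_convolution adic_summable_fps_mult
        adic_summable_exp_fps adic_summable_odd_fps order_ge_uminus v r w)
  finally have s_part: "adic_sum (\<lambda>n. fps_nth ?e n * Jser (n + k) v r) =
      adic_sum (\<lambda>N. fps_nth (?e * ?b) N * ?t N) + mps_var (S k)"
    by (simp only: exp_fps_neg_mult adic_sum_fps_one add_0)
  have "adic_sum (\<lambda>N. fps_nth (sinv_fps v r * exp_fps v) N * ?t N) +
      adic_sum (\<lambda>N. fps_nth (?e * ?b) N * ?t N) = 0"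
    by (simp only: sinv_fps_cancel fps_zero_nth mult_zero_left adic_sum_zero
        flip: distrib_right fps_add_nth adic_sum_add)
  then show ?thesis
    unfolding t_part s_part add.assoc[symmetric] by simp
qed

section \<open>The genus-zero solutions\<close>

lemma order_ge_Iser: "order_ge (Iser k v) 1"
  unfolding Iser_def by (intro order_ge_adic_sum order_ge_mult_left[OF order_ge_var])

lemma order_ge_Jser: "order_ge (Jser k v r) 1"
  unfolding Jser_def
  by (intro order_ge_add order_ge_adic_sum order_ge_mult_left[OF order_ge_var])

lemma Iser_contraction:
  assumes "order_ge (a - b) d"
  shows "order_ge (Iser k a - Iser k b) (Suc d)"
  unfolding Iser_def adic_sum_diff[symmetric] left_diff_distrib[symmetric]
  by (intro order_ge_adic_sum order_ge_mult[OF order_ge_exp_fps_nth_diff[OF assms] order_ge_var]) simp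

lemma Jser_contraction:
  assumes ab: "order_ge (a - b) d"
  shows "order_ge (Jser k v a - Jser k v b) (Suc d)"
proof -
  have odd: "order_ge (fps_nth (exp_fps v * odd_fps a) n - fps_nth (exp_fps v * odd_fps b) n) d" for n
    unfolding fps_mult_nth sum_subtractf[symmetric] right_diff_distrib[symmetric]
    by (intro order_ge_sum order_ge_mult_left[OF order_ge_odd_fps_nth_diff[OF ab]])
  have "wser v a - wser v b = mps_const (1/2) * (a ^ 2 - b ^ 2)"
    by (simp add: wser_def algebra_simps)
  then have w: "order_ge (wser v a - wser v b) d"
    by (simp add: order_ge_const_mult order_ge_power_diff[OF ab])
  show ?thesis
    unfolding Jser_def
    by (simp only: add_diff_add flip: adic_sum_diff left_diff_distrib)
       (intro order_ge_add order_ge_adic_sum order_ge_mult[OF odd order_ge_var]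
          order_ge_mult[OF order_ge_exp_fps_nth_diff[OF w] order_ge_var]; simp)
qed

definition v_sol :: mps where
  "v_sol = (THE v. Iser 0 v = v)"

definition r_sol :: mps where
  "r_sol = (THE r. Jser 0 v_sol r = r)"

lemma Iser_unique_fixpoint: "\<exists>!v. Iser 0 v = v"
  by (rule contraction_unique_fixpoint) (rule Iser_contraction)

lemma Jser_unique_fixpoint: "\<exists>!r. Jser 0 v r = r"
  by (rule contraction_unique_fixpoint) (rule Jser_contraction)

lemma Iser_v_sol: "Iser 0 v_sol = v_sol"
  unfolding v_sol_def by (rule theI'[OF Iser_unique_fixpoint])

lemma Jser_r_sol: "Jser 0 v_sol r_sol = r_sol"
  unfolding r_sol_def by (rule theI'[OF Jser_unique_fixpoint])

lemma order_ge_v_sol: "order_ge v_sol 1"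
  using order_ge_Iser[of 0 v_sol] by (simp add: Iser_v_sol)

lemma order_ge_r_sol: "order_ge r_sol 1"
  using order_ge_Jser[of 0 v_sol r_sol] by (simp add: Jser_r_sol)

lemma mfps_ops_eq:
  "madd f g = mps_coeff (MPS f + MPS g)"
  "msub f g = mps_coeff (MPS f - MPS g)"
  "mmul f g = mps_coeff (MPS f * MPS g)"
  "msc c f = mps_coeff (mps_const c * MPS f)"
  "mconst c = mps_coeff (mps_const c)"
  "mvar x = mps_coeff (mps_var x)"
  "mpow f n = mps_coeff (MPS f ^ n)"
  "mfsum F A = mps_coeff (\<Sum>i\<in>A. MPS (F i))"
proof -
  show "msc c f = mps_coeff (mps_const c * MPS f)"
    by (rule ext) (simp add: msc_def mps_coeff_const_mult)
  show "mpow f n = mps_coeff (MPS f ^ n)"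
    by (induction n) (simp_all add: mpow_def one_mps_def mps_const_def times_mps_def)
qed (simp_all add: plus_mps_def minus_mps_def times_mps_def mps_const_def mps_var_def
      fun_eq_iff mfsum_def mps_coeff_sum)

lemma Bsum_eq: "Bsum n (mps_coeff v) (mps_coeff r) = mps_coeff (fps_nth (exp_fps v * odd_fps r) n)"
proof -
  have "(\<Sum>i\<le>n. mps_const (1 / (fact i * of_nat (dfact (2*n - 2*i + 1)))) * (v ^ i * r ^ (2*n - 2*i + 1)))
      = (\<Sum>i\<le>n. fps_nth (exp_fps v) i * fps_nth (odd_fps r) (n - i))"
  proof (rule sum.cong)
    fix i
    assume "i \<in> {..n}"
    then have n: "2*n - 2*i + 1 = 2 * (n - i) + 1" by auto
    have "mps_const (1 / (fact i * of_nat (dfact (2 * (n - i) + 1)))) =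
        mps_const (1 / fact i) * mps_const (1 / of_nat (dfact (2 * (n - i) + 1)))"
      by (simp flip: mps_const_mult)
    then show "mps_const (1 / (fact i * of_nat (dfact (2*n - 2*i + 1)))) * (v ^ i * r ^ (2*n - 2*i + 1)) =
        fps_nth (exp_fps v) i * fps_nth (odd_fps r) (n - i)"
      unfolding n by (simp add: exp_fps_def odd_fps_def mult_ac)
  qed simp
  then show ?thesis
    by (simp add: Bsum_def mfps_ops_eq fps_mult_nth atLeast0AtMost)
qed

lemma wvr_eq: "wvr (mps_coeff v) (mps_coeff r) = mps_coeff (wser v r)"
  by (simp add: wvr_def wser_def mfps_ops_eq)

lemma EL_v_eq:
  assumes v: "order_ge v 1"
  shows "EL_v (mps_coeff v) = mps_coeff (Iser 0 v - v)"
proof -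
  let ?F = "\<lambda>n. mps_const (1 / fact n) * ((mps_var (T n) - mps_const (if n = 1 then 1 else 0)) * v ^ n)"
  have "adic_summable ?F"
    unfolding adic_summable_def
    by (intro allI order_ge_const_mult order_ge_mult_left[OF order_ge_power[OF v]])
  then have "EL_v (mps_coeff v) = mps_coeff (adic_sum ?F)"
    by (simp add: EL_v_def tt_def mfps_ops_eq msuminf_eq_adic_sum)
  also have "adic_sum ?F =
      adic_sum (\<lambda>n. fps_nth (exp_fps v) n * mps_var (T n) - (if n = 1 then v else 0))"
    by (rule arg_cong[where f=adic_sum]) (auto simp: exp_fps_def algebra_simps)
  also have "\<dots> = Iser 0 v - v"
    using adic_sum_single[OF v] by (simp add: adic_sum_diff Iser_def)
  finally show ?thesis .
qed

lemma EL_r_eq: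
  assumes v: "order_ge v 1" and r: "order_ge r 1"
  shows "EL_r (mps_coeff v) (mps_coeff r) = mps_coeff (Jser 0 v r - r)"
proof -
  let ?b = "fps_nth (exp_fps v * odd_fps r)"
  let ?F = "\<lambda>n. (mps_var (T (n + 1)) - mps_const (if n + 1 = 1 then 1 else 0)) * ?b n"
  let ?G = "\<lambda>n. mps_const (1 / fact n) * (mps_var (S n) * wser v r ^ n)"
  have b: "adic_summable ?b"
    by (intro adic_summable_fps_mult adic_summable_exp_fps adic_summable_odd_fps v r)
  have w: "order_ge (wser v r) 1"
    using v r by (rule order_ge_wser)
  have sF: "adic_summable ?F"
    using b by (simp add: adic_summable_def order_ge_mult_left)
  have sG: "adic_summable ?G"
    unfolding adic_summable_def
    by (intro allI order_ge_const_mult order_ge_mult_left[OF order_ge_power[OF w]])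
  have b0: "?b 0 = r"
    by (simp add: fps_mult_nth exp_fps_def odd_fps_def)
  have "EL_r (mps_coeff v) (mps_coeff r) =
      madd (msuminf (\<lambda>n. mps_coeff (?F n))) (msuminf (\<lambda>n. mps_coeff (?G n)))"
    by (simp add: EL_r_def tt_def Bsum_eq wvr_eq mfps_ops_eq)
  also have "\<dots> = mps_coeff (adic_sum ?F + adic_sum ?G)"
    by (simp only: msuminf_eq_adic_sum[OF sF] msuminf_eq_adic_sum[OF sG] mfps_ops_eq MPS_mps_coeff)
  also have "adic_sum ?F = adic_sum (\<lambda>n. ?b n * mps_var (T (n + 1)) - (if n = 0 then r else 0))"
    using b0 by (intro arg_cong[where f=adic_sum]) (auto simp: algebra_simps)
  also have "\<dots> + adic_sum ?G = Jser 0 v r - r"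
    using adic_sum_single[OF order_ge_0, of r] by (simp add: adic_sum_diff Jser_def exp_fps_def mult_ac)
  finally show ?thesis .
qed

lemma THE_root_eq_fixpoint:
  assumes fixpoint: "\<Phi> v = v" "order_ge v 1"
    and unique: "\<And>w. \<Phi> w = w \<Longrightarrow> w = v"
    and equation: "\<And>w. order_ge w 1 \<Longrightarrow> E (mps_coeff w) = mps_coeff (\<Phi> w - w)"
  shows "(THE f. f 0 = 0 \<and> E f = mconst 0) = mps_coeff v"
proof (rule the_equality)
  have "mps_coeff v 0 = 0"
    using fixpoint(2) by (simp only: order_ge_1_iff)
  then show "mps_coeff v 0 = 0 \<and> E (mps_coeff v) = mconst 0"
    using fixpoint equation[of v] by (simp add: mfps_ops_eq)
next
  fix f
  assume f: "f 0 = 0 \<and> E f = mconst 0"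
  then have "order_ge (MPS f) 1"
    unfolding order_ge_1_iff by simp
  with f equation[of "MPS f"] have "\<Phi> (MPS f) = MPS f"
    by (metis MPS_mps_coeff mfps_ops_eq(5) mps.sel mps_const_0 right_minus_eq)
  then show "f = mps_coeff v"
    using unique by fastforce
qed

lemma vtop_eq: "vtop = mps_coeff v_sol"
  unfolding vtop_def
proof (rule THE_root_eq_fixpoint[where \<Phi>="Iser 0"])
  show "Iser 0 w = w \<Longrightarrow> w = v_sol" for w
    using Iser_unique_fixpoint Iser_v_sol by blast
qed (fact Iser_v_sol order_ge_v_sol EL_v_eq)+

lemma rtop_eq: "rtop = mps_coeff r_sol"
  unfolding rtop_def vtop_eq
proof (rule THE_root_eq_fixpoint[where \<Phi>="Jser 0 v_sol"])
  show "Jser 0 v_sol w = w \<Longrightarrow> w = r_sol" for w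
    using Jser_unique_fixpoint Jser_r_sol by blast
qed (fact Jser_r_sol order_ge_r_sol EL_r_eq[OF order_ge_v_sol])+

lemma II_eq: "II k = mps_coeff (Iser k v_sol)"
proof -
  have "II k = msuminf (\<lambda>n. mps_coeff (fps_nth (exp_fps v_sol) n * mps_var (T (n + k))))"
    by (simp add: II_def vtop_eq mfps_ops_eq exp_fps_def mult_ac)
  also have "\<dots> = mps_coeff (Iser k v_sol)"
    unfolding Iser_def
    by (rule msuminf_eq_adic_sum[OF adic_summable_mult_right[OF adic_summable_exp_fps[OF order_ge_v_sol]]])
  finally show ?thesis .
qed

lemma JJ_eq: "JJ k = mps_coeff (Jser k v_sol r_sol)"
proof -
  let ?b = "fps_nth (exp_fps v_sol * odd_fps r_sol)" and ?e = "fps_nth (exp_fps (wser v_sol r_sol))"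
  have "adic_summable ?b" "adic_summable ?e"
    by (intro adic_summable_fps_mult adic_summable_exp_fps adic_summable_odd_fps
        order_ge_wser order_ge_v_sol order_ge_r_sol)+
  then have "adic_summable (\<lambda>n. ?b n * mps_var (T (n + k + 1)))"
    "adic_summable (\<lambda>n. ?e n * mps_var (S (n + k)))"
    by (simp_all add: adic_summable_mult_right)
  moreover have "JJ k = madd (msuminf (\<lambda>n. mps_coeff (?b n * mps_var (T (n + k + 1)))))
      (msuminf (\<lambda>n. mps_coeff (?e n * mps_var (S (n + k)))))"
    by (simp add: JJ_def vtop_eq rtop_eq mfps_ops_eq Bsum_eq wvr_eq exp_fps_def mult_ac)
  ultimately show ?thesis
    by (simp only: Jser_def msuminf_eq_adic_sum mfps_ops_eq MPS_mps_coeff)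
qed

theorem lemma2p2:
  fixes k :: nat
  shows "mvar (T k) =
           msuminf (\<lambda>n. msc ((-1)^n / of_nat (fact n)) (mmul (mpow (II 0) n) (II (n+k)))) \<and>
         mvar (S k) =
           madd (msuminf (\<lambda>n. mmul
                  (mfsum (\<lambda>i. msc ((-1)^(n+1) /
                        (2^(n-i) * of_nat (fact i) * of_nat (fact (n-i)) * of_nat (2*n - 2*i + 1)))
                        (mmul (mpow (II 0) i) (mpow (JJ 0) (2*n - 2*i + 1)))) {..n})
                  (II (n+k+1))))
                (msuminf (\<lambda>n. msc ((-1)^n / of_nat (fact n))
                  (mmul (mpow (madd (II 0) (msc (1/2) (mpow (JJ 0) 2))) n) (JJ (n+k)))))"
proof -
  have "adic_summable (\<lambda>n. fps_nth (exp_fps (- v_sol)) n * Iser (n + k) v_sol)"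
    "adic_summable (\<lambda>n. fps_nth (sinv_fps v_sol r_sol) n * Iser (n + k + 1) v_sol)"
    "adic_summable (\<lambda>n. fps_nth (exp_fps (- wser v_sol r_sol)) n * Jser (n + k) v_sol r_sol)"
    by (intro adic_summable_mult_right adic_summable_sinv_fps adic_summable_exp_fps
        order_ge_uminus order_ge_wser order_ge_v_sol order_ge_r_sol)+
  then show ?thesis
    by (simp only: II_eq Iser_v_sol JJ_eq Jser_r_sol mfps_ops_eq MPS_mps_coeff of_nat_fact
        wser_def[symmetric] fps_nth_sinv_fps[symmetric] fps_nth_exp_fps_neg_mult msuminf_eq_adic_sum
        T_inversion[OF order_ge_v_sol, symmetric] S_inversion[OF order_ge_v_sol order_ge_r_sol, symmetric]
        simp_thms)
qed

end
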